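(* Let $\mathbf{A}$, $\mathbf{B}$, $\mathbf{C}$ be the commutative integral residuated chains described in the context, with $\mathbf{A}$ a subalgebra of both $\mathbf{B}$ and $\mathbf{C}$. There is no totally ordered residuated lattice $\mathbf{D}$ (not necessarily commutative nor integral) together with residuated-lattice embeddings $h\colon \mathbf{B}\to\mathbf{D}$ and $k\colon \mathbf{C}\to\mathbf{D}$ such that $h(a)=k(a)$ for all $a\in A$. In other words, the V-formation $(\mathbf{A},\mathbf{B},\mathbf{C},\iota_B,\iota_C)$, where $\iota_B,\iota_C$ are the inclusion maps, has no amalgam in the class of totally ordered residuated lattices.
   Context: A residuated lattice is an algebra $(L,\wedge,\vee,\cdot,\backslash,/,1)$ where $(L,\wedge,\vee)$ is a lattice, $(L,\cdot,1)$ is a monoid, and $xy\le z \iff y\le x\backslash z \iff x\le z/y$. It is integral if $1$ is the top element; commutative if $\cdot$ is commutative, in which case $x\backslash y=y/x$ is written $x\to y$; a chain if totally ordered. In a chain, $x\to y=\max\{z: xz\le y\}$, and in an integral chain $x\to y=1$ whenever $x\le y$. The algebras (all commutative, integral, totally ordered, with $1$ the multiplicative identity and top): - $\mathbf{A}$: universe $u<v<1$, $xy=\min(x,y)$, and $x\to y=1$ if $x\le y$, $x\to y=y$ otherwise. - $\mathbf{B}$: universe $u<b<v<1$, with $v\cdot v=v$, $v\cdot b=b$, $v\cdot u=u$, $b\cdot b=u$, $b\cdot u=u$, $u\cdot u=u$; residuals: $x\to y=1$ if $x\le y$, and $v\to b=b$, $v\to u=u$, $b\to u=b$. - $\mathbf{C}$: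 universe $u<d<c<v<1$, with $v\cdot v=v$, $v\cdot c=d$, $v\cdot d=d$, $v\cdot u=u$, $c\cdot c=c\cdot d=d\cdot d=u$, and $x\cdot u=u$ for all $x$; residuals: $x\to y=1$ if $x\le y$, and $v\to c=c$, $v\to d=c$, $v\to u=u$, $c\to d=v$, $c\to u=c$, $d\to u=c$. The set $\{u,v,1\}$ is the universe of a subalgebra of both $\mathbf{B}$ and $\mathbf{C}$, equal to $\mathbf{A}$. An embedding is an injective homomorphism in the signature $\{\wedge,\vee,\cdot,\backslash,/,1\}$. *)

theory Defs
  imports Main
begin

record 'a rl =
  rle   :: "'a \<Rightarrow> 'a \<Rightarrow> bool"
  rmeet :: "'a \<Rightarrow> 'a \<Rightarrow> 'a"
  rjoin :: "'a \<Rightarrow> 'a \<Rightarrow> 'a"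
  rmult :: "'a \<Rightarrow> 'a \<Rightarrow> 'a"
  rldiv :: "'a \<Rightarrow> 'a \<Rightarrow> 'a"   (* x \ y *)
  rrdiv :: "'a \<Rightarrow> 'a \<Rightarrow> 'a"   (* x / y *)
  rone  :: "'a"

definition residuated_lattice :: "'a rl \<Rightarrow> bool" where
  "residuated_lattice R \<longleftrightarrow>
     (\<forall>x. rle R x x) \<and>
     (\<forall>x y. rle R x y \<and> rle R y x \<longrightarrow> x = y) \<and>
     (\<forall>x y z. rle R x y \<and> rle R y z \<longrightarrow> rle R x z) \<and>
     (\<forall>x y z. rle R z (rmeet R x y) \<longleftrightarrow> rle R z x \<and> rle R z y) \<and>
     (\<forall>x y z. rle R (rjoin R x y) z \<longleftrightarrow> rle R x z \<and> rle R y z) \<and>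
     (\<forall>x y z. rmult R (rmult R x y) z = rmult R x (rmult R y z)) \<and>
     (\<forall>x. rmult R (rone R) x = x \<and> rmult R x (rone R) = x) \<and>
     (\<forall>x y z. (rle R (rmult R x y) z \<longleftrightarrow> rle R y (rldiv R x z)) \<and>
              (rle R (rmult R x y) z \<longleftrightarrow> rle R x (rrdiv R z y)))"

definition residuated_chain :: "'a rl \<Rightarrow> bool" where
  "residuated_chain R \<longleftrightarrow> residuated_lattice R \<and> (\<forall>x y. rle R x y \<or> rle R y x)"

definition rl_embedding :: "'a rl \<Rightarrow> 'b rl \<Rightarrow> ('a \<Rightarrow> 'b) \<Rightarrow> bool" where
  "rl_embedding R S h \<longleftrightarrow> inj h \<and>
     (\<forall>x y. h (rmeet R x y) = rmeet S (h x) (h y)) \<and>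
     (\<forall>x y. h (rjoin R x y) = rjoin S (h x) (h y)) \<and>
     (\<forall>x y. h (rmult R x y) = rmult S (h x) (h y)) \<and>
     (\<forall>x y. h (rldiv R x y) = rldiv S (h x) (h y)) \<and>
     (\<forall>x y. h (rrdiv R x y) = rrdiv S (h x) (h y)) \<and>
     h (rone R) = rone S"

datatype elA = Au | Av | A1

fun rankA :: "elA \<Rightarrow> nat" where
  "rankA Au = 0" | "rankA Av = 1" | "rankA A1 = 2"

definition leA :: "elA \<Rightarrow> elA \<Rightarrow> bool" where "leA x y \<longleftrightarrow> rankA x \<le> rankA y"
definition minA :: "elA \<Rightarrow> elA \<Rightarrow> elA" where "minA x y = (if leA x y then x else y)"
definition maxA :: "elA \<Rightarrow> elA \<Rightarrow> elA" where "maxA x y = (if leA x y then y else x)"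
definition impA :: "elA \<Rightarrow> elA \<Rightarrow> elA" where "impA x y = (if leA x y then A1 else y)"

definition algA :: "elA rl" where
  "algA = \<lparr> rle = leA, rmeet = minA, rjoin = maxA, rmult = minA,
            rldiv = (\<lambda>x y. impA x y), rrdiv = (\<lambda>y x. impA x y), rone = A1 \<rparr>"

datatype elB = Bu | Bb | Bv | B1

fun rankB :: "elB \<Rightarrow> nat" where
  "rankB Bu = 0" | "rankB Bb = 1" | "rankB Bv = 2" | "rankB B1 = 3"

definition leB :: "elB \<Rightarrow> elB \<Rightarrow> bool" where "leB x y \<longleftrightarrow> rankB x \<le> rankB y"
definition minB :: "elB \<Rightarrow> elB \<Rightarrow> elB" where "minB x y = (if leB x y then x else y)"
definition maxB :: "elB \<Rightarrow> elB \<Rightarrow> elB" where "maxB x y = (if leB x y then y else x)"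

fun multB :: "elB \<Rightarrow> elB \<Rightarrow> elB" where
  "multB B1 y = y"
| "multB x B1 = x"
| "multB Bv Bv = Bv"
| "multB Bv Bb = Bb"
| "multB Bb Bv = Bb"
| "multB _ _ = Bu"

fun impB :: "elB \<Rightarrow> elB \<Rightarrow> elB" where
  "impB x y = (if leB x y then B1 else
     (case (x, y) of
        (B1, _) \<Rightarrow> y
      | (Bv, Bb) \<Rightarrow> Bb
      | (Bv, Bu) \<Rightarrow> Bu
      | (Bb, Bu) \<Rightarrow> Bb
      | _ \<Rightarrow> B1))"

definition algB :: "elB rl" where
  "algB = \<lparr> rle = leB, rmeet = minB, rjoin = maxB, rmult = multB,
            rldiv = (\<lambda>x y. impB x y), rrdiv = (\<lambda>y x. impB x y), rone = B1 \<rparr>"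

datatype elC = Cu | Cd | Cc | Cv | C1

fun rankC :: "elC \<Rightarrow> nat" where
  "rankC Cu = 0" | "rankC Cd = 1" | "rankC Cc = 2" | "rankC Cv = 3" | "rankC C1 = 4"

definition leC :: "elC \<Rightarrow> elC \<Rightarrow> bool" where "leC x y \<longleftrightarrow> rankC x \<le> rankC y"
definition minC :: "elC \<Rightarrow> elC \<Rightarrow> elC" where "minC x y = (if leC x y then x else y)"
definition maxC :: "elC \<Rightarrow> elC \<Rightarrow> elC" where "maxC x y = (if leC x y then y else x)"

fun multC :: "elC \<Rightarrow> elC \<Rightarrow> elC" where
  "multC C1 y = y"
| "multC x C1 = x"
| "multC Cv Cv = Cv"
| "multC Cv Cc = Cd"
| "multC Cc Cv = Cd"
| "multC Cv Cd = Cd"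
| "multC Cd Cv = Cd"
| "multC _ _ = Cu"

fun impC :: "elC \<Rightarrow> elC \<Rightarrow> elC" where
  "impC x y = (if leC x y then C1 else
     (case (x, y) of
        (C1, _) \<Rightarrow> y
      | (Cv, Cc) \<Rightarrow> Cc
      | (Cv, Cd) \<Rightarrow> Cc
      | (Cv, Cu) \<Rightarrow> Cu
      | (Cc, Cd) \<Rightarrow> Cv
      | (Cc, Cu) \<Rightarrow> Cc
      | (Cd, Cu) \<Rightarrow> Cc
      | _ \<Rightarrow> C1))"

definition algC :: "elC rl" where
  "algC = \<lparr> rle = leC, rmeet = minC, rjoin = maxC, rmult = multC,
            rldiv = (\<lambda>x y. impC x y), rrdiv = (\<lambda>y x. impC x y), rone = C1 \<rparr>"

fun iotaB :: "elA \<Rightarrow> elB" where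
  "iotaB Au = Bu" | "iotaB Av = Bv" | "iotaB A1 = B1"

fun iotaC :: "elA \<Rightarrow> elC" where
  "iotaC Au = Cu" | "iotaC Av = Cv" | "iotaC A1 = C1"

end

theory Submission
  imports Defs
begin

text \<open>In an amalgam, B contributes elements b with v b = b, b b = u, b\u = b, and C contributes
  d < c with v c = d, d c = u, d\u = c. If b \<le> c then b = v b \<le> v c = d, so b c \<le> d c = u and
  c \<le> b\u = b \<le> d. If c \<le> b then d b \<le> b b = u, so b \<le> d\u = c, hence b = c and
  d = v c = v b = b = c. Either way d = c, contradicting injectivity of the embedding of C.\<close>

lemma rl_refl: "residuated_lattice D \<Longrightarrow> rle D x x"
  unfolding residuated_lattice_def by metis

lemma rl_antisym: "residuated_lattice D \<Longrightarrow> rle D x y \<Longrightarrow> rle D y x \<Longrightarrow> x = y"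
  unfolding residuated_lattice_def by metis

lemma rl_trans: "residuated_lattice D \<Longrightarrow> rle D x y \<Longrightarrow> rle D y z \<Longrightarrow> rle D x z"
  unfolding residuated_lattice_def by metis

lemma rl_le_meet_iff: "residuated_lattice D \<Longrightarrow> rle D z (rmeet D x y) \<longleftrightarrow> rle D z x \<and> rle D z y"
  unfolding residuated_lattice_def by metis

lemma rl_mult_le_iff_le_ldiv:
  "residuated_lattice D \<Longrightarrow> rle D (rmult D x y) z \<longleftrightarrow> rle D y (rldiv D x z)"
  unfolding residuated_lattice_def by metis

lemma rl_mult_le_iff_le_rdiv:
  "residuated_lattice D \<Longrightarrow> rle D (rmult D x y) z \<longleftrightarrow> rle D x (rrdiv D z y)"
  unfolding residuated_lattice_def by metis

lemma rl_mult_mono_left: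
  assumes D: "residuated_lattice D" and "rle D x x'"
  shows "rle D (rmult D x y) (rmult D x' y)"
proof -
  have "rle D x' (rrdiv D (rmult D x' y) y)"
    using rl_mult_le_iff_le_rdiv[OF D] rl_refl[OF D] by blast
  then have "rle D x (rrdiv D (rmult D x' y) y)"
    using rl_trans[OF D] \<open>rle D x x'\<close> by blast
  then show ?thesis
    using rl_mult_le_iff_le_rdiv[OF D] by blast
qed

lemma rl_mult_mono_right:
  assumes D: "residuated_lattice D" and "rle D y y'"
  shows "rle D (rmult D x y) (rmult D x y')"
proof -
  have "rle D y' (rldiv D x (rmult D x y'))"
    using rl_mult_le_iff_le_ldiv[OF D] rl_refl[OF D] by blast
  then have "rle D y (rldiv D x (rmult D x y'))"
    using rl_trans[OF D] \<open>rle D y y'\<close> by blast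
  then show ?thesis
    using rl_mult_le_iff_le_ldiv[OF D] by blast
qed

lemma rl_embedding_le_of_meet_eq:
  assumes "rl_embedding R D h" and D: "residuated_lattice D" and "rmeet R x y = x"
  shows "rle D (h x) (h y)"
proof -
  have "h x = rmeet D (h x) (h y)"
    using assms unfolding rl_embedding_def by metis
  then show ?thesis
    using rl_le_meet_iff[OF D] rl_refl[OF D] by metis
qed

lemma residuated_chain_collapse:
  assumes D: "residuated_chain D"
    and vb: "rmult D v b = b" and bb: "rmult D b b = u" and bu: "rldiv D b u = b"
    and vc: "rmult D v c = d" and dc: "rmult D d c = u" and du: "rldiv D d u = c"
    and "rle D d c"
  shows "d = c"
proof -
  have L: "residuated_lattice D" and total: "rle D b c \<or> rle D c b"
    using D unfolding residuated_chain_def by blast+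
  note le_trans = rl_trans[OF L] and le_antisym = rl_antisym[OF L]
  from total show ?thesis
  proof
    assume "rle D b c"
    then have "rle D b d"
      using rl_mult_mono_right[OF L, of b c v] vb vc by simp
    then have "rle D (rmult D b c) u"
      using rl_mult_mono_left[OF L, of b d c] dc by simp
    then have "rle D c b"
      using rl_mult_le_iff_le_ldiv[OF L] bu by simp
    with \<open>rle D b d\<close> \<open>rle D d c\<close> show ?thesis
      using le_trans le_antisym by blast
  next
    assume "rle D c b"
    then have "rle D (rmult D d b) u"
      using rl_mult_mono_left[OF L, of d b b] le_trans \<open>rle D d c\<close> bb by simp
    then have "rle D b c"
      using rl_mult_le_iff_le_ldiv[OF L] du by simp
    with \<open>rle D c b\<close> have "b = c"
      using le_antisym by blast
    then show ?thesis
      using vb vc by simp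
  qed
qed

lemma rl_embedding_algB_relations:
  assumes "rl_embedding algB D h"
  shows "rmult D (h Bv) (h Bb) = h Bb" and "rmult D (h Bb) (h Bb) = h Bu"
    and "rldiv D (h Bb) (h Bu) = h Bb"
proof -
  have mult: "\<And>x y. h (multB x y) = rmult D (h x) (h y)"
    and ldiv: "\<And>x y. h (impB x y) = rldiv D (h x) (h y)"
    using assms unfolding rl_embedding_def algB_def by (simp_all del: impB.simps)
  show "rmult D (h Bv) (h Bb) = h Bb" "rmult D (h Bb) (h Bb) = h Bu"
    using mult[of Bv Bb] mult[of Bb Bb] by simp_all
  show "rldiv D (h Bb) (h Bu) = h Bb"
    using ldiv[of Bb Bu] by (simp add: leB_def)
qed

lemma rl_embedding_algC_relations:
  assumes k: "rl_embedding algC D k" and D: "residuated_lattice D"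
  shows "rmult D (k Cv) (k Cc) = k Cd" and "rmult D (k Cd) (k Cc) = k Cu"
    and "rldiv D (k Cd) (k Cu) = k Cc" and "rle D (k Cd) (k Cc)"
proof -
  have mult: "\<And>x y. k (multC x y) = rmult D (k x) (k y)"
    and ldiv: "\<And>x y. k (impC x y) = rldiv D (k x) (k y)"
    using k unfolding rl_embedding_def algC_def by (simp_all del: impC.simps)
  show "rmult D (k Cv) (k Cc) = k Cd" "rmult D (k Cd) (k Cc) = k Cu"
    using mult[of Cv Cc] mult[of Cd Cc] by simp_all
  show "rldiv D (k Cd) (k Cu) = k Cc"
    using ldiv[of Cd Cu] by (simp add: leC_def)
  show "rle D (k Cd) (k Cc)"
    using rl_embedding_le_of_meet_eq[OF k D] by (simp add: algC_def minC_def leC_def)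
qed

theorem mainTheorem1:
  "\<not> (\<exists>(D :: 'd rl) h k.
        residuated_chain D \<and>
        rl_embedding algB D h \<and> rl_embedding algC D k \<and>
        (\<forall>a. h (iotaB a) = k (iotaC a)))"
proof
  assume "\<exists>(D :: 'd rl) h k.
        residuated_chain D \<and>
        rl_embedding algB D h \<and> rl_embedding algC D k \<and>
        (\<forall>a. h (iotaB a) = k (iotaC a))"
  then obtain D :: "'d rl" and h k where D: "residuated_chain D"
    and h: "rl_embedding algB D h" and k: "rl_embedding algC D k"
    and common: "\<forall>a. h (iotaB a) = k (iotaC a)" by blast
  have L: "residuated_lattice D"
    using D unfolding residuated_chain_def by blast
  note B = rl_embedding_algB_relations[OF h]
    and C = rl_embedding_algC_relations[OF k L]
  have shared: "k Cu = h Bu" "k Cv = h Bv"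
    using common[rule_format, of Au] common[rule_format, of Av] by simp_all
  note C' = C[unfolded shared]
  have "k Cd = k Cc"
    using residuated_chain_collapse[OF D B C'(1-3) C(4)] .
  then show False
    using k unfolding rl_embedding_def by (simp add: inj_eq)
qed

end
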